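(* Assume the standing hypotheses below, and fix $n < \omega$. Let $X_n$ be a basis of the free group $G_n$, and let $\mathcal{B}_n$ be the family of all subgroups of $G_n$ generated by subsets of $X_n$. Then the collection $$\mathcal{B}'_n = \{ A \in \mathcal{B}_n : A + G_i \text{ is a pure subgroup of } G \text{ for every } i < \omega \}$$ is a $G(\aleph_0)$-family of the group $G_n$, all of whose members are pure subgroups of $G$.
   Context: Standing hypotheses: $G$ is a torsion-free abelian group and $0 = G_0 < G_1 < \dots < G_n < \dots$ ($n<\omega$) is an ascending chain of subgroups of $G$ such that every $G_n$ is free, every $G_n$ is a pure subgroup of $G$, and $G = \bigcup_{n<\omega} G_n$. A subgroup $H$ of an abelian group $G$ is pure if solubility in $G$ of every equation $nx = h$ with $n\in\mathbb{Z}$, $h\in H$ implies its solubility in $H$. A $G(\aleph_0)$-family of an abelian group $M$ is a collection $\mathcal{C}$ of subgroups of $M$ such that: (i) $0 \in \mathcal{C}$ and $M \in \mathcal{C}$; (ii) $\mathcal{C}$ is closed under unions of ascending chains; (iii) for every $A_0 \in \mathcal{C}$ and every countable subset $H \subseteq M$ there exists $A \in \mathcal{C}$ with $A_0 \cup H \subseteq A$ and $A/A_0$ countable. *)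

theory Defs
  imports "HOL-Algebra.Algebra" "HOL-Library.Countable_Set"
begin

text \<open>Abelian groups are written multiplicatively (HOL-Algebra); integer
multiples n x are the integer powers x [^] n.\<close>

definition torsion_free :: "('a, 'b) monoid_scheme \<Rightarrow> bool" where
  "torsion_free G \<longleftrightarrow>
     (\<forall>x\<in>carrier G. \<forall>k::int. k \<noteq> 0 \<longrightarrow> pow G x k = one G \<longrightarrow> x = one G)"

definition pure_subgroup :: "'a set \<Rightarrow> ('a, 'b) monoid_scheme \<Rightarrow> bool" where
  "pure_subgroup H G \<longleftrightarrow> subgroup H G \<and>
     (\<forall>k::int. \<forall>h\<in>H. (\<exists>x\<in>carrier G. pow G x k = h) \<longrightarrow> (\<exists>y\<in>H. pow G y k = h))"

definition is_basis :: "('a, 'b) monoid_scheme \<Rightarrow> 'a set \<Rightarrow> 'a set \<Rightarrow> bool" where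
  "is_basis G H B \<longleftrightarrow> B \<subseteq> H \<and> generate G B = H \<and>
     (\<forall>F f. finite F \<longrightarrow> F \<subseteq> B \<longrightarrow>
        finprod G (\<lambda>x. pow G x (f x :: int)) F = one G \<longrightarrow> (\<forall>x\<in>F. f x = 0))"

definition free_subgroup :: "'a set \<Rightarrow> ('a, 'b) monoid_scheme \<Rightarrow> bool" where
  "free_subgroup H G \<longleftrightarrow> subgroup H G \<and> (\<exists>B. is_basis G H B)"

definition countable_quotient :: "('a, 'b) monoid_scheme \<Rightarrow> 'a set \<Rightarrow> 'a set \<Rightarrow> bool" where
  "countable_quotient G A A0 \<longleftrightarrow> countable {r_coset G A0 a | a. a \<in> A}"

text \<open>A G(aleph_0)-family of the subgroup M of G.  "Ascending chains" are
  read as arbitrary nonempty chains (under inclusion) of members.\<close>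
definition G_aleph0_family :: "('a, 'b) monoid_scheme \<Rightarrow> 'a set \<Rightarrow> 'a set set \<Rightarrow> bool" where
  "G_aleph0_family G M C \<longleftrightarrow>
     (\<forall>A\<in>C. subgroup A G \<and> A \<subseteq> M) \<and>
     {one G} \<in> C \<and> M \<in> C \<and>
     (\<forall>S. S \<subseteq> C \<longrightarrow> S \<noteq> {} \<longrightarrow> (\<forall>A\<in>S. \<forall>B\<in>S. A \<subseteq> B \<or> B \<subseteq> A) \<longrightarrow> \<Union>S \<in> C) \<and>
     (\<forall>A0\<in>C. \<forall>H. H \<subseteq> M \<longrightarrow> countable H \<longrightarrow>
        (\<exists>A\<in>C. A0 \<union> H \<subseteq> A \<and> countable_quotient G A A0))"

end

theory Submission
  imports Defs
begin

(* Most closure properties are formal: members of B'_n are subgroups of G_n, the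
   trivial group and G_n itself belong to it (because G_n + G_i = G_(max n i) is
   pure), and a chain of members has as union the subgroup generated by the union
   of the generating sets, while (U S) + G_i is a directed union of the pure
   subgroups A + G_i, hence pure.  Purity of A = A + G_0 is the case i = 0.

   The real work is the countable extension property.  Given A0 = <Y0> in B'_n and
   a countable H in G_n, we enlarge a countable Z in X_n in countably many rounds:
   in one round, for every i, every z in <Z> and every k <> 0 such that the
   equation k x in z + A0 + G_i has a solution r, we add a finite part F of X_n
   with r in <F> + G_i.  Purity of A0 + G_i then shows that every solution x lies
   in <Y0 u F> + G_i.  After omega rounds A = <Y0 u Z> satisfies that every root of
   an element of A + G_i lies in A + G_i, and A/A0 is countable since A = A0 + <Z>. *)

section \<open>Generic facts on abelian groups\<close>

context comm_group
begin

lemma set_mult_comm: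
  assumes "H \<subseteq> carrier G" "K \<subseteq> carrier G"
  shows "H <#> K = K <#> H"
proof -
  have swap: "H' <#> K' \<subseteq> K' <#> H'" if HK: "H' \<subseteq> carrier G" "K' \<subseteq> carrier G" for H' K'
  proof
    fix x assume "x \<in> H' <#> K'"
    then obtain h k where hk: "h \<in> H'" "k \<in> K'" "x = h \<otimes> k" unfolding set_mult_def by blast
    then have "x = k \<otimes> h" using HK m_comm[of h k] by blast
    then show "x \<in> K' <#> H'" using hk(1,2) unfolding set_mult_def by blast
  qed
  show ?thesis using swap[OF assms] swap[OF assms(2,1)] by (rule equalityI)
qed

lemma set_mult_upper:
  assumes "subgroup H G" "subgroup K G"
  shows "H \<subseteq> H <#> K" and "K \<subseteq> H <#> K"
proof -
  have left: "H' \<subseteq> H' <#> K'" if "subgroup H' G" "subgroup K' G" for H' K'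
  proof
    fix x assume x: "x \<in> H'"
    then have "x \<otimes> \<one> \<in> H' <#> K'"
      unfolding set_mult_def using subgroup.one_closed[OF that(2)] by blast
    then show "x \<in> H' <#> K'" using subgroup.mem_carrier[OF that(1) x] by simp
  qed
  show "H \<subseteq> H <#> K" by (rule left[OF assms])
  have "K \<subseteq> K <#> H" by (rule left[OF assms(2,1)])
  then show "K \<subseteq> H <#> K"
    using set_mult_comm[OF subgroup.subset[OF assms(1)] subgroup.subset[OF assms(2)]] by simp
qed

lemma set_mult_least:
  assumes "subgroup T G" "H \<subseteq> T" "K \<subseteq> T"
  shows "H <#> K \<subseteq> T"
  using mono_set_mult[OF assms(2,3), where G = G] subgroup_mult_id[OF assms(1)] by simp

lemma set_mult_absorb:
  assumes "subgroup H G" "subgroup K G" "K \<subseteq> H"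
  shows "H <#> K = H"
  using set_mult_least[OF assms(1) order_refl assms(3)] set_mult_upper(1)[OF assms(1,2)] by blast

lemma set_mult_trivial:
  assumes "subgroup H G"
  shows "H <#> {\<one>} = H" and "{\<one>} <#> H = H"
proof -
  show "H <#> {\<one>} = H"
    using set_mult_absorb[OF assms triv_subgroup] subgroup.one_closed[OF assms] by blast
  then show "{\<one>} <#> H = H" using set_mult_comm[of H "{\<one>}"] subgroup.subset[OF assms] by simp
qed

lemma generate_Un_subset:
  assumes "Y \<subseteq> carrier G" "Z \<subseteq> carrier G"
  shows "generate G (Y \<union> Z) \<subseteq> generate G Y <#> generate G Z"
proof (rule generate_subgroup_incl)
  have Y: "subgroup (generate G Y) G" and Z: "subgroup (generate G Z) G"
    using assms by (simp_all add: generate_is_subgroup)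
  show "subgroup (generate G Y <#> generate G Z) G" by (rule mult_subgroups[OF Y Z])
  have "Y \<subseteq> generate G Y" "Z \<subseteq> generate G Z" by (auto intro: generate.incl)
  then show "Y \<union> Z \<subseteq> generate G Y <#> generate G Z"
    using set_mult_upper[OF Y Z] by blast
qed

lemma directed_Union_subgroup:
  assumes "S \<noteq> {}" "\<And>A. A \<in> S \<Longrightarrow> subgroup A G"
    and "\<And>A B. A \<in> S \<Longrightarrow> B \<in> S \<Longrightarrow> \<exists>C\<in>S. A \<union> B \<subseteq> C"
  shows "subgroup (\<Union>S) G"
proof (rule subgroup.intro)
  show "\<Union>S \<subseteq> carrier G" using subgroup.subset[OF assms(2)] by blast
  obtain A where "A \<in> S" using assms(1) by blast
  then show "\<one> \<in> \<Union>S" using subgroup.one_closed[OF assms(2)] by blast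
  show "inv x \<in> \<Union>S" if x: "x \<in> \<Union>S" for x
  proof -
    obtain A where "A \<in> S" "x \<in> A" using x by blast
    then show ?thesis using subgroup.m_inv_closed[OF assms(2)] by blast
  qed
  show "x \<otimes> y \<in> \<Union>S" if xy: "x \<in> \<Union>S" "y \<in> \<Union>S" for x y
  proof -
    obtain A B where "A \<in> S" "B \<in> S" "x \<in> A" "y \<in> B" using xy by blast
    moreover obtain C where "C \<in> S" "A \<union> B \<subseteq> C" using assms(3) calculation(1,2) by blast
    ultimately show ?thesis using subgroup.m_closed[OF assms(2)[of C]] by blast
  qed
qed

lemma generate_directed_Union:
  assumes "\<W> \<noteq> {}" "\<Union>\<W> \<subseteq> carrier G"
    and "\<And>U V. U \<in> \<W> \<Longrightarrow> V \<in> \<W> \<Longrightarrow> \<exists>W\<in>\<W>. U \<union> V \<subseteq> W"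
  shows "generate G (\<Union>\<W>) = (\<Union>W\<in>\<W>. generate G W)"
proof
  have "generate G W \<subseteq> generate G (\<Union>\<W>)" if "W \<in> \<W>" for W
    using that by (intro mono_generate) blast
  then show "(\<Union>W\<in>\<W>. generate G W) \<subseteq> generate G (\<Union>\<W>)" by blast
  have "subgroup (\<Union>W\<in>\<W>. generate G W) G"
  proof (rule directed_Union_subgroup)
    show "generate G ` \<W> \<noteq> {}" using assms(1) by blast
    show "subgroup A G" if A: "A \<in> generate G ` \<W>" for A
    proof -
      obtain W where "W \<in> \<W>" "A = generate G W" using A by blast
      moreover have "W \<subseteq> carrier G" using assms(2) calculation(1) by blast
      ultimately show ?thesis using generate_is_subgroup by simp
    qed
    show "\<exists>C\<in>generate G ` \<W>. A \<union> B \<subseteq> C"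
      if AB: "A \<in> generate G ` \<W>" "B \<in> generate G ` \<W>" for A B
    proof -
      obtain U V where "U \<in> \<W>" "V \<in> \<W>" "A = generate G U" "B = generate G V"
        using AB by blast
      moreover obtain W where "W \<in> \<W>" "U \<union> V \<subseteq> W" using assms(3) calculation(1,2) by blast
      ultimately show ?thesis using mono_generate[of U W] mono_generate[of V W] by blast
    qed
  qed
  moreover have "\<Union>\<W> \<subseteq> (\<Union>W\<in>\<W>. generate G W)" by (auto intro: generate.incl)
  ultimately show "generate G (\<Union>\<W>) \<subseteq> (\<Union>W\<in>\<W>. generate G W)"
    by (intro generate_subgroup_incl)
qed

lemma generate_finite_support:
  assumes "S \<subseteq> carrier G" "x \<in> generate G S"
  obtains F where "finite F" "F \<subseteq> S" "x \<in> generate G F"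
proof -
  have "generate G (\<Union>{F. finite F \<and> F \<subseteq> S}) = (\<Union>F\<in>{F. finite F \<and> F \<subseteq> S}. generate G F)"
    using assms(1) by (intro generate_directed_Union) (auto intro: exI[of _ "{}"])
  moreover have "\<Union>{F. finite F \<and> F \<subseteq> S} = S" by auto
  ultimately show thesis using assms(2) that by auto
qed

lemma generate_incseq_Union:
  assumes "incseq W" "\<And>m. W m \<subseteq> carrier G"
  shows "generate G (\<Union>m. W m) = (\<Union>m. generate G (W m))"
proof -
  have "\<exists>C\<in>range W. U \<union> V \<subseteq> C" if "U \<in> range W" "V \<in> range W" for U V
    using that assms(1) by (auto intro!: bexI[of _ "W (max _ _)"] dest: monoD[of W, OF _ max.cobounded1]
        monoD[of W, OF _ max.cobounded2])
  moreover have "\<Union>(range W) \<subseteq> carrier G" using assms(2) by blast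
  ultimately show ?thesis by (subst generate_directed_Union) auto
qed

lemma generate_countable:
  assumes "countable S" "S \<subseteq> carrier G"
  shows "countable (generate G S)"
proof -
  let ?L = "lists (S \<union> (\<lambda>s. inv s) ` S)"
  let ?prod = "\<lambda>l. foldr (\<otimes>) l \<one>"
  have prod_append: "?prod (l1 @ l2) = ?prod l1 \<otimes> ?prod l2 \<and> ?prod l1 \<in> carrier G"
    if "l1 \<in> ?L" "l2 \<in> ?L" for l1 l2
  proof -
    have "set l2 \<subseteq> carrier G" using that(2) assms(2) by auto
    then have "?prod l2 \<in> carrier G" by (induction l2) auto
    then show ?thesis using that(1) assms(2) by (induction l1) (auto simp: m_assoc)
  qed
  have "generate G S \<subseteq> ?prod ` ?L"
  proof
    fix x assume "x \<in> generate G S"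
    then show "x \<in> ?prod ` ?L"
    proof (induction rule: generate.induct)
      case one show ?case by (rule image_eqI[of _ _ "[]"]) simp_all
    next
      case (incl h) then show ?case
        using assms(2) by (intro image_eqI[of _ _ "[h]"]) auto
    next
      case (inv h) then show ?case
        using assms(2) by (intro image_eqI[of _ _ "[inv h]"]) auto
    next
      case (eng h1 h2)
      then obtain l1 l2 where "l1 \<in> ?L" "l2 \<in> ?L" "h1 = ?prod l1" "h2 = ?prod l2" by blast
      then show ?case using prod_append by (intro image_eqI[of _ _ "l1 @ l2"]) auto
    qed
  qed
  moreover have "countable (?prod ` ?L)" using assms(1) by auto
  ultimately show ?thesis by (rule countable_subset)
qed

lemma countable_support:
  assumes "countable H" "S \<subseteq> carrier G" "H \<subseteq> generate G S"
  obtains T where "countable T" "T \<subseteq> S" "H \<subseteq> generate G T"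
proof -
  have "\<forall>h\<in>H. \<exists>F. finite F \<and> F \<subseteq> S \<and> h \<in> generate G F"
    using generate_finite_support[OF assms(2)] assms(3) by (metis subsetD)
  then obtain F where F: "\<And>h. h \<in> H \<Longrightarrow> finite (F h) \<and> F h \<subseteq> S \<and> h \<in> generate G (F h)"
    by metis
  show thesis
  proof (rule that[of "\<Union>(F ` H)"])
    show "countable (\<Union>(F ` H))" using assms(1) F by (blast intro: countable_finite)
    show "\<Union>(F ` H) \<subseteq> S" using F by blast
    show "H \<subseteq> generate G (\<Union>(F ` H))" using F mono_generate[of _ "\<Union>(F ` H)"] by blast
  qed
qed

lemma countable_quotientI:
  assumes "subgroup A0 G" "A \<subseteq> A0 <#> B" "countable B" "B \<subseteq> carrier G"
  shows "countable_quotient G A A0"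
proof -
  have "{A0 #> a | a. a \<in> A} \<subseteq> (\<lambda>b. A0 #> b) ` B"
  proof
    fix c assume "c \<in> {A0 #> a | a. a \<in> A}"
    then obtain a0 b where ab: "a0 \<in> A0" "b \<in> B" "c = A0 #> (a0 \<otimes> b)"
      using assms(2) unfolding set_mult_def by blast
    have a0: "a0 \<in> carrier G" using subgroup.mem_carrier[OF assms(1) ab(1)] .
    have "c = (A0 #> a0) #> b"
      using ab(2,3) a0 assms(4) coset_mult_assoc[OF subgroup.subset[OF assms(1)]] by auto
    also have "A0 #> a0 = A0" by (rule coset_join2[OF a0 assms(1) ab(1)])
    finally show "c \<in> (\<lambda>b. A0 #> b) ` B" using ab(2) by blast
  qed
  then show ?thesis unfolding countable_quotient_def
    using assms(3) by (blast intro: countable_subset)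
qed

text \<open>Purity.  Every subgroup closed under taking roots is pure; in a torsion-free
  group the converse holds, since roots are unique there.\<close>

lemma pure_subgroupI:
  assumes "subgroup S G"
    and "\<And>k x. k \<noteq> (0::int) \<Longrightarrow> x \<in> carrier G \<Longrightarrow> x [^] k \<in> S \<Longrightarrow> x \<in> S"
  shows "pure_subgroup S G"
  unfolding pure_subgroup_def
proof (intro conjI assms(1) allI ballI impI)
  fix k :: int and h assume h: "h \<in> S" "\<exists>x\<in>carrier G. x [^] k = h"
  then obtain x where x: "x \<in> carrier G" "x [^] k = h" by blast
  show "\<exists>y\<in>S. y [^] k = h"
  proof (cases "k = 0")
    case True then show ?thesis using x subgroup.one_closed[OF assms(1)] by force
  next
    case False then show ?thesis using assms(2)[OF False x(1)] x h(1) by blast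
  qed
qed

lemma pure_subgroupD:
  assumes "torsion_free G" "pure_subgroup S G"
    and "k \<noteq> (0::int)" "x \<in> carrier G" "x [^] k \<in> S"
  shows "x \<in> S"
proof -
  have S: "subgroup S G" using assms(2) by (simp add: pure_subgroup_def)
  obtain y where y: "y \<in> S" "y [^] k = x [^] k"
    using assms(2,4,5) unfolding pure_subgroup_def by blast
  have yc: "y \<in> carrier G" using subgroup.mem_carrier[OF S y(1)] .
  have "(x \<otimes> inv y) [^] k = x [^] k \<otimes> inv (y [^] k)"
    using assms(4) yc by (simp add: int_pow_distrib int_pow_inv)
  also have "\<dots> = \<one>" using assms(4) y(2) by simp
  finally have "x \<otimes> inv y = \<one>"
    using assms(1,3,4) yc unfolding torsion_free_def by blast
  then have "inv (inv y) = x" using assms(4) yc by (intro inv_equality) simp_all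
  then show ?thesis using y(1) yc by simp
qed

lemma pure_directed_Union:
  assumes "torsion_free G" "S \<noteq> {}" "\<And>A. A \<in> S \<Longrightarrow> pure_subgroup A G"
    and "\<And>A B. A \<in> S \<Longrightarrow> B \<in> S \<Longrightarrow> \<exists>C\<in>S. A \<union> B \<subseteq> C"
  shows "pure_subgroup (\<Union>S) G"
proof (rule pure_subgroupI)
  show "subgroup (\<Union>S) G"
    using assms(2-4) by (intro directed_Union_subgroup) (auto simp: pure_subgroup_def)
  show "x \<in> \<Union>S" if "k \<noteq> 0" "x \<in> carrier G" "x [^] k \<in> \<Union>S" for k :: int and x
    using that pure_subgroupD[OF assms(1) assms(3)] by blast
qed

end

lemma countable_iteration:
  assumes step: "\<And>Z. countable Z \<Longrightarrow> Z \<subseteq> S \<Longrightarrow> \<exists>Z'. countable Z' \<and> Z \<subseteq> Z' \<and> Z' \<subseteq> S \<and> R Z Z'"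
    and "countable Z0" "Z0 \<subseteq> S"
  obtains Zs :: "nat \<Rightarrow> 'a set"
  where "Zs 0 = Z0" "incseq Zs" "\<And>m. countable (Zs m) \<and> Zs m \<subseteq> S" "\<And>m. R (Zs m) (Zs (Suc m))"
proof -
  obtain f where f: "\<And>Z. countable Z \<Longrightarrow> Z \<subseteq> S \<Longrightarrow> countable (f Z) \<and> Z \<subseteq> f Z \<and> f Z \<subseteq> S \<and> R Z (f Z)"
    using step by metis
  define Zs where "Zs m = (f ^^ m) Z0" for m
  have bounded: "countable (Zs m) \<and> Zs m \<subseteq> S" for m
    by (induction m) (use assms(2,3) f in \<open>auto simp: Zs_def\<close>)
  have rounds: "Zs m \<subseteq> Zs (Suc m) \<and> R (Zs m) (Zs (Suc m))" for m
    using f[OF bounded[of m, THEN conjunct1] bounded[of m, THEN conjunct2]] by (simp add: Zs_def)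
  then have "incseq Zs" by (simp add: incseq_SucI)
  moreover have "Zs 0 = Z0" by (simp add: Zs_def)
  ultimately show thesis using bounded rounds by (intro that[of Zs]) blast+
qed

text \<open>G is torsion-free abelian, G_0 \<subseteq> G_1 \<subseteq> ... are pure subgroups, and Xn is a
  generating set of G_n.\<close>

locale pure_filtration = comm_group G for G :: "('a, 'b) monoid_scheme" (structure) +
  fixes Gs :: "nat \<Rightarrow> 'a set" and n :: nat and Xn :: "'a set"
  assumes torsion_free: "torsion_free G"
    and Gs_pure: "\<And>m. pure_subgroup (Gs m) G"
    and Gs_Suc: "\<And>m. Gs m \<subseteq> Gs (Suc m)"
    and Xn_subset: "Xn \<subseteq> Gs n"
    and generate_Xn: "generate G Xn = Gs n"
begin

definition admissible :: "'a set set" where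
  "admissible = {A \<in> {generate G Y | Y. Y \<subseteq> Xn}. \<forall>i. pure_subgroup (A <#> Gs i) G}"

definition roots_absorbed :: "'a set \<Rightarrow> 'a set \<Rightarrow> 'a set \<Rightarrow> bool" where
  "roots_absorbed Y Z Z' \<longleftrightarrow> (\<forall>i k x. k \<noteq> (0::int) \<longrightarrow> x \<in> carrier G \<longrightarrow>
     x [^] k \<in> generate G (Y \<union> Z) <#> Gs i \<longrightarrow> x \<in> generate G (Y \<union> Z') <#> Gs i)"

lemma Gs_subgroup: "subgroup (Gs m) G"
  using Gs_pure by (simp add: pure_subgroup_def)

lemma Xn_carrier: "Xn \<subseteq> carrier G"
  using Xn_subset subgroup.subset[OF Gs_subgroup] by blast

lemma generate_subset_Xn:
  assumes "Y \<subseteq> Xn"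
  shows "subgroup (generate G Y) G" "generate G Y \<subseteq> Gs n"
  using assms Xn_carrier generate_is_subgroup mono_generate[OF assms] generate_Xn by auto

lemma Gs_set_mult: "Gs i <#> Gs j = Gs (max i j)"
proof -
  have mono: "Gs i \<subseteq> Gs j" if "i \<le> j" for i j
    using that by (rule lift_Suc_mono_le[of Gs, OF Gs_Suc])
  show ?thesis
  proof (cases "i \<le> j")
    case True then show ?thesis
      using set_mult_absorb[OF Gs_subgroup Gs_subgroup mono[OF True]]
        set_mult_comm[OF subgroup.subset[OF Gs_subgroup] subgroup.subset[OF Gs_subgroup]]
      by (simp add: max_def)
  next
    case False then show ?thesis
      using set_mult_absorb[OF Gs_subgroup Gs_subgroup mono] by (simp add: max_def)
  qed
qed

text \<open>A root of an element of G_n + G_i lies in generate F + G_i for a finite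
  F \<subseteq> Xn, because G_n + G_i = G_(max n i) is pure.\<close>

lemma root_finite_support:
  assumes "k \<noteq> (0::int)" "x \<in> carrier G" "x [^] k \<in> Gs n <#> Gs i"
  obtains F where "finite F" "F \<subseteq> Xn" "x \<in> generate G F <#> Gs i"
proof -
  have "x \<in> Gs n <#> Gs i"
    using pure_subgroupD[OF torsion_free Gs_pure assms(1,2)] assms(3) by (simp add: Gs_set_mult)
  then obtain y g where yg: "y \<in> Gs n" "g \<in> Gs i" "x = y \<otimes> g"
    unfolding set_mult_def by blast
  obtain F where "finite F" "F \<subseteq> Xn" "y \<in> generate G F"
    using generate_finite_support[OF Xn_carrier] yg(1) generate_Xn by metis
  then show thesis using yg(2,3) that unfolding set_mult_def by blast
qed

section \<open>Countable extension inside B'_n\<close>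

context
  fixes Y0 :: "'a set"
  assumes Y0_subset: "Y0 \<subseteq> Xn"
    and Y0_pure: "\<And>i. pure_subgroup (generate G Y0 <#> Gs i) G"
begin

lemma A0_subgroup: "subgroup (generate G Y0 <#> Gs i) G"
  using Y0_pure by (simp add: pure_subgroup_def)

text \<open>One equation k x \<in> z + A0 + G_i: a single solution r and its finite support F
  suffice for all solutions, since two solutions differ by a root of an element of
  the pure subgroup A0 + G_i.\<close>

lemma coset_roots_finite_support:
  assumes "k \<noteq> (0::int)" "z \<in> Gs n"
  obtains F where "finite F" "F \<subseteq> Xn"
    "\<And>x. x \<in> carrier G \<Longrightarrow> x [^] k \<in> z <# (generate G Y0 <#> Gs i) \<Longrightarrow>
       x \<in> generate G (Y0 \<union> F) <#> Gs i"
proof (cases "\<exists>r\<in>carrier G. r [^] k \<in> z <# (generate G Y0 <#> Gs i)")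
  case False then show thesis by (intro that[of "{}"]) auto
next
  case True
  then obtain r a where r: "r \<in> carrier G" "a \<in> generate G Y0 <#> Gs i" "r [^] k = z \<otimes> a"
    unfolding l_coset_def by blast
  have zc: "z \<in> carrier G" and ac: "a \<in> carrier G"
    using assms(2) r(2) subgroup.mem_carrier[OF Gs_subgroup] subgroup.mem_carrier[OF A0_subgroup]
    by auto
  have "generate G Y0 <#> Gs i \<subseteq> Gs n <#> Gs i"
    using mono_set_mult[OF generate_subset_Xn(2)[OF Y0_subset] order_refl, where G = G] .
  then have "z \<otimes> a \<in> Gs n <#> Gs i"
    using assms(2) r(2) set_mult_upper(1)[OF Gs_subgroup Gs_subgroup]
      subgroup.m_closed[OF mult_subgroups[OF Gs_subgroup Gs_subgroup]] by blast
  then obtain F where F: "finite F" "F \<subseteq> Xn" "r \<in> generate G F <#> Gs i"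
    using root_finite_support[OF assms(1) r(1)] r(3) by metis
  let ?T = "generate G (Y0 \<union> F) <#> Gs i"
  have T: "subgroup ?T G"
    using generate_subset_Xn(1) Y0_subset F(2) by (intro mult_subgroups Gs_subgroup) simp
  have A0_T: "generate G Y0 <#> Gs i \<subseteq> ?T" and F_T: "generate G F <#> Gs i \<subseteq> ?T"
    by (rule mono_set_mult[OF mono_generate order_refl]; blast)+
  show thesis
  proof (rule that[OF F(1,2)])
    fix x assume x: "x \<in> carrier G" "x [^] k \<in> z <# (generate G Y0 <#> Gs i)"
    then obtain b where b: "b \<in> generate G Y0 <#> Gs i" "x [^] k = z \<otimes> b"
      unfolding l_coset_def by blast
    have bc: "b \<in> carrier G" using subgroup.mem_carrier[OF A0_subgroup b(1)] .
    have "(x \<otimes> inv r) [^] k = b \<otimes> inv a"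
      using x(1) r zc ac bc b(2) by (simp add: int_pow_distrib int_pow_inv inv_mult m_ac)
    then have "(x \<otimes> inv r) [^] k \<in> generate G Y0 <#> Gs i"
      using b(1) r(2) A0_subgroup by (simp add: subgroup.m_closed subgroup.m_inv_closed)
    then have "x \<otimes> inv r \<in> ?T"
      using pure_subgroupD[OF torsion_free Y0_pure assms(1)] x(1) r(1) A0_T by blast
    moreover have "r \<in> ?T" using F(3) F_T by blast
    ultimately have "(x \<otimes> inv r) \<otimes> r \<in> ?T" by (rule subgroup.m_closed[OF T])
    then show "x \<in> ?T" using x(1) r(1) by (simp add: m_assoc)
  qed
qed

lemma roots_absorbed_step:
  assumes "countable Z" "Z \<subseteq> Xn"
  shows "\<exists>Z'. countable Z' \<and> Z \<subseteq> Z' \<and> Z' \<subseteq> Xn \<and> roots_absorbed Y0 Z Z'"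
proof -
  let ?I = "(UNIV :: nat set) \<times> generate G Z \<times> (UNIV :: int set)"
  have witness: "\<exists>F. finite F \<and> F \<subseteq> Xn \<and> (z \<in> generate G Z \<longrightarrow> k \<noteq> 0 \<longrightarrow>
      (\<forall>x\<in>carrier G. x [^] k \<in> z <# (generate G Y0 <#> Gs i) \<longrightarrow> x \<in> generate G (Y0 \<union> F) <#> Gs i))"
    for i z and k :: int
  proof (cases "z \<in> generate G Z \<and> k \<noteq> 0")
    case True
    then have "z \<in> Gs n" using generate_subset_Xn(2)[OF assms(2)] by blast
    then obtain F where "finite F" "F \<subseteq> Xn"
      "\<And>x. x \<in> carrier G \<Longrightarrow> x [^] k \<in> z <# (generate G Y0 <#> Gs i) \<Longrightarrow>
         x \<in> generate G (Y0 \<union> F) <#> Gs i"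
      using coset_roots_finite_support True by metis
    then show ?thesis by blast
  qed blast
  then have "\<exists>W. \<forall>i z (k::int). finite (W i z k) \<and> W i z k \<subseteq> Xn \<and>
      (z \<in> generate G Z \<longrightarrow> k \<noteq> 0 \<longrightarrow> (\<forall>x\<in>carrier G.
         x [^] k \<in> z <# (generate G Y0 <#> Gs i) \<longrightarrow> x \<in> generate G (Y0 \<union> W i z k) <#> Gs i))"
    by (intro choice allI)
  then obtain W where W: "\<And>i z (k::int). finite (W i z k) \<and> W i z k \<subseteq> Xn \<and>
      (z \<in> generate G Z \<longrightarrow> k \<noteq> 0 \<longrightarrow> (\<forall>x\<in>carrier G.
         x [^] k \<in> z <# (generate G Y0 <#> Gs i) \<longrightarrow> x \<in> generate G (Y0 \<union> W i z k) <#> Gs i))"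
    by blast
  have W_finite: "finite (W i z k)" and W_subset: "W i z k \<subseteq> Xn" for i z k
    using W by blast+
  define Z' where "Z' = Z \<union> (\<Union>(i, z, k) \<in> ?I. W i z k)"
  have "countable (generate G Z)" using generate_countable[OF assms(1)] assms(2) Xn_carrier by blast
  then have "countable ?I" by (intro countable_SIGMA countableI_type)
  then have "countable Z'" unfolding Z'_def
    using assms(1) W_finite by (intro countable_Un countable_UN) (auto intro: countable_finite)
  moreover have "Z' \<subseteq> Xn" unfolding Z'_def using assms(2) W_subset by blast
  moreover have "roots_absorbed Y0 Z Z'" unfolding roots_absorbed_def
  proof (intro allI impI)
    fix i k x assume k: "k \<noteq> (0::int)" and x: "x \<in> carrier G"
      and xk: "x [^] k \<in> generate G (Y0 \<union> Z) <#> Gs i"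
    have "generate G (Y0 \<union> Z) \<subseteq> generate G Y0 <#> generate G Z"
      using Y0_subset assms(2) Xn_carrier by (intro generate_Un_subset) auto
    then obtain a0 z g where azg: "a0 \<in> generate G Y0" "z \<in> generate G Z" "g \<in> Gs i"
      "x [^] k = (a0 \<otimes> z) \<otimes> g"
      using xk unfolding set_mult_def by blast
    have "a0 \<in> carrier G" "z \<in> carrier G" "g \<in> carrier G"
      using subgroup.mem_carrier[OF generate_subset_Xn(1)[OF Y0_subset] azg(1)]
        subgroup.mem_carrier[OF generate_subset_Xn(1)[OF assms(2)] azg(2)]
        subgroup.mem_carrier[OF Gs_subgroup azg(3)] by simp_all
    then have "x [^] k = z \<otimes> (a0 \<otimes> g)" using azg(4) by (simp add: m_ac)
    then have "x [^] k \<in> z <# (generate G Y0 <#> Gs i)"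
      using azg(1,3) unfolding l_coset_def set_mult_def by blast
    then have "x \<in> generate G (Y0 \<union> W i z k) <#> Gs i" using W[of i z k] azg(2) k x by blast
    moreover have "W i z k \<subseteq> Z'" using azg(2) by (auto simp: Z'_def)
    ultimately show "x \<in> generate G (Y0 \<union> Z') <#> Gs i"
      using mono_set_mult[OF mono_generate[of "Y0 \<union> W i z k" "Y0 \<union> Z'"] order_refl, where G = G] by blast
  qed
  ultimately show ?thesis unfolding Z'_def by blast
qed

lemma admissible_extension:
  assumes "countable H" "H \<subseteq> Gs n"
  obtains A where "A \<in> admissible" "generate G Y0 \<union> H \<subseteq> A"
    "countable_quotient G A (generate G Y0)"
proof -
  obtain Z0 where Z0: "countable Z0" "Z0 \<subseteq> Xn" "H \<subseteq> generate G Z0"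
    using countable_support[OF assms(1) Xn_carrier] assms(2) generate_Xn by metis
  obtain Zs where Zs: "Zs 0 = Z0" "incseq Zs" "\<And>m. countable (Zs m) \<and> Zs m \<subseteq> Xn"
    and absorbed: "\<And>m. roots_absorbed Y0 (Zs m) (Zs (Suc m))"
    using countable_iteration[OF roots_absorbed_step Z0(1,2)] by metis
  define Z where "Z = (\<Union>m. Zs m)"
  define A where "A = generate G (Y0 \<union> Z)"
  have Y0Z: "Y0 \<union> Z \<subseteq> Xn" using Y0_subset Zs(3) by (auto simp: Z_def)
  have A_Union: "A = (\<Union>m. generate G (Y0 \<union> Zs m))"
  proof -
    have "incseq (\<lambda>m. Y0 \<union> Zs m)" using Zs(2) by (auto simp: incseq_def)
    then show ?thesis unfolding A_def Z_def
      using Y0_subset Zs(3) Xn_carrier by (subst generate_incseq_Union[symmetric]) auto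
  qed
  have "pure_subgroup (A <#> Gs i) G" for i
  proof (rule pure_subgroupI)
    show "subgroup (A <#> Gs i) G"
      unfolding A_def using generate_subset_Xn(1)[OF Y0Z] Gs_subgroup by (rule mult_subgroups)
    fix k :: int and x assume k: "k \<noteq> 0" and x: "x \<in> carrier G" and xk: "x [^] k \<in> A <#> Gs i"
    obtain m where "x [^] k \<in> generate G (Y0 \<union> Zs m) <#> Gs i"
      using xk unfolding A_Union set_mult_def by blast
    then have "x \<in> generate G (Y0 \<union> Zs (Suc m)) <#> Gs i"
      using absorbed[of m] k x unfolding roots_absorbed_def by blast
    moreover have "generate G (Y0 \<union> Zs (Suc m)) \<subseteq> A" unfolding A_Union by blast
    ultimately show "x \<in> A <#> Gs i" using mono_set_mult[OF _ order_refl, where G = G] by blast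
  qed
  then have "A \<in> admissible" unfolding admissible_def A_def using Y0Z by blast
  moreover have "generate G Y0 \<union> H \<subseteq> A"
    using Z0(3) Zs(1) mono_generate[of Y0 "Y0 \<union> Z"] mono_generate[of Z0 "Y0 \<union> Z"]
    by (auto simp: A_def Z_def)
  moreover have "countable_quotient G A (generate G Y0)"
  proof (rule countable_quotientI)
    show "subgroup (generate G Y0) G" using generate_subset_Xn(1)[OF Y0_subset] .
    show "A \<subseteq> generate G Y0 <#> generate G Z"
      unfolding A_def using Y0_subset Y0Z Xn_carrier by (intro generate_Un_subset) auto
    show "countable (generate G Z)"
      using Zs(3) Y0Z Xn_carrier by (intro generate_countable) (auto simp: Z_def)
    show "generate G Z \<subseteq> carrier G"
      using Y0Z Xn_carrier generate_incl by blast
  qed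
  ultimately show thesis by (rule that)
qed

end

lemma admissible_Union:
  assumes "S \<subseteq> admissible" "S \<noteq> {}" "\<forall>A\<in>S. \<forall>B\<in>S. A \<subseteq> B \<or> B \<subseteq> A"
  shows "\<Union>S \<in> admissible"
proof -
  have directed: "\<exists>C\<in>S. A \<union> B \<subseteq> C" if AB: "A \<in> S" "B \<in> S" for A B
  proof (cases "A \<subseteq> B")
    case True then show ?thesis using AB(2) by blast
  next
    case False then have "B \<subseteq> A" using assms(3) AB by blast
    then show ?thesis using AB(1) by blast
  qed
  have "\<exists>Y. \<forall>A\<in>S. Y A \<subseteq> Xn \<and> A = generate G (Y A)"
    using assms(1) unfolding admissible_def by (intro bchoice) blast
  then obtain Y where Y: "\<And>A. A \<in> S \<Longrightarrow> Y A \<subseteq> Xn \<and> A = generate G (Y A)" by blast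
  have "subgroup A G" if "A \<in> S" for A
    using Y[OF that] generate_subset_Xn(1)[of "Y A"] by simp
  then have "subgroup (\<Union>S) G" by (rule directed_Union_subgroup[OF assms(2) _ directed])
  then have generated: "\<Union>S = generate G (\<Union>(Y ` S))"
  proof (intro equalityI generate_subgroup_incl)
    show "\<Union>(Y ` S) \<subseteq> \<Union>S"
    proof
      fix y assume "y \<in> \<Union>(Y ` S)"
      then obtain A where A: "A \<in> S" "y \<in> Y A" by blast
      then have "y \<in> generate G (Y A)" by (intro generate.incl)
      then show "y \<in> \<Union>S" using Y[OF A(1)] A(1) by blast
    qed
    show "\<Union>S \<subseteq> generate G (\<Union>(Y ` S))"
    proof
      fix x assume "x \<in> \<Union>S"
      then obtain A where "A \<in> S" "x \<in> generate G (Y A)" using Y by blast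
      then show "x \<in> generate G (\<Union>(Y ` S))" using mono_generate[of "Y A" "\<Union>(Y ` S)"] by blast
    qed
  qed
  have "pure_subgroup (\<Union>S <#> Gs i) G" for i
  proof -
    have "\<Union>S <#> Gs i = \<Union>((\<lambda>A. A <#> Gs i) ` S)" unfolding set_mult_def by blast
    moreover have "pure_subgroup (\<Union>((\<lambda>A. A <#> Gs i) ` S)) G"
    proof (rule pure_directed_Union[OF torsion_free])
      show "(\<lambda>A. A <#> Gs i) ` S \<noteq> {}" using assms(2) by blast
      show "pure_subgroup P G" if "P \<in> (\<lambda>A. A <#> Gs i) ` S" for P
        using that assms(1) unfolding admissible_def by blast
      show "\<exists>R\<in>(\<lambda>A. A <#> Gs i) ` S. P \<union> Q \<subseteq> R"
        if PQ: "P \<in> (\<lambda>A. A <#> Gs i) ` S" "Q \<in> (\<lambda>A. A <#> Gs i) ` S" for P Q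
      proof -
        obtain A B where "A \<in> S" "B \<in> S" "P = A <#> Gs i" "Q = B <#> Gs i" using PQ by blast
        moreover obtain C where "C \<in> S" "A \<union> B \<subseteq> C" using directed calculation(1,2) by blast
        ultimately show ?thesis
          using mono_set_mult[of A C "Gs i" "Gs i" G] mono_set_mult[of B C "Gs i" "Gs i" G] by blast
      qed
    qed
    ultimately show ?thesis by simp
  qed
  moreover have "\<Union>(Y ` S) \<subseteq> Xn" using Y by blast
  ultimately show ?thesis
    unfolding admissible_def using generated by (intro CollectI conjI exI[of _ "\<Union>(Y ` S)"]) auto
qed

theorem admissible_G_aleph0_family: "G_aleph0_family G (Gs n) admissible"
  unfolding G_aleph0_family_def
proof (intro conjI ballI allI impI)
  show "subgroup A G" "A \<subseteq> Gs n" if "A \<in> admissible" for A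
    using that generate_subset_Xn unfolding admissible_def by blast+
  have "\<forall>i. pure_subgroup (generate G {} <#> Gs i) G"
    using Gs_pure set_mult_trivial(2)[OF Gs_subgroup] by (simp add: generate_empty)
  then show "{\<one>} \<in> admissible" unfolding admissible_def by (force simp: generate_empty)
  show "Gs n \<in> admissible"
    unfolding admissible_def using generate_Xn Gs_pure Gs_set_mult by force
  show "\<Union>S \<in> admissible"
    if "S \<subseteq> admissible" "S \<noteq> {}" "\<forall>A\<in>S. \<forall>B\<in>S. A \<subseteq> B \<or> B \<subseteq> A" for S
    using admissible_Union that by blast
  show "\<exists>A\<in>admissible. A0 \<union> H \<subseteq> A \<and> countable_quotient G A A0"
    if A0H: "A0 \<in> admissible" "H \<subseteq> Gs n" "countable H" for A0 H
  proof -
    obtain Y0 where "Y0 \<subseteq> Xn" "A0 = generate G Y0" "\<And>i. pure_subgroup (generate G Y0 <#> Gs i) G"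
      using A0H(1) unfolding admissible_def by blast
    then show ?thesis using admissible_extension A0H(2,3) by metis
  qed
qed

lemma admissible_pure:
  assumes "Gs 0 = {\<one>}" "A \<in> admissible"
  shows "pure_subgroup A G"
proof -
  obtain Y where "Y \<subseteq> Xn" "A = generate G Y" "pure_subgroup (A <#> Gs 0) G"
    using assms(2) unfolding admissible_def by blast
  then show ?thesis
    using set_mult_trivial(1)[OF generate_subset_Xn(1)] assms(1) by auto
qed

end

theorem lemma2:
  fixes G :: "('a, 'b) monoid_scheme" (structure)
    and Gs :: "nat \<Rightarrow> 'a set" and n :: nat and Xn :: "'a set"
  assumes "comm_group G"
    and "torsion_free G"
    and "Gs 0 = {\<one>}"
    and "\<And>m. Gs m \<subset> Gs (Suc m)"
    and "\<And>m. free_subgroup (Gs m) G"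
    and "\<And>m. pure_subgroup (Gs m) G"
    and "(\<Union>m. Gs m) = carrier G"
    and "is_basis G (Gs n) Xn"
  shows "G_aleph0_family G (Gs n)
           {A \<in> {generate G Y | Y. Y \<subseteq> Xn}. \<forall>i. pure_subgroup (A <#> Gs i) G}
       \<and> (\<forall>A \<in> {A \<in> {generate G Y | Y. Y \<subseteq> Xn}. \<forall>i. pure_subgroup (A <#> Gs i) G}.
            pure_subgroup A G)"
proof -
  have basis: "Xn \<subseteq> Gs n" "generate G Xn = Gs n" using assms(8) unfolding is_basis_def by auto
  interpret pure_filtration G Gs n Xn
    by (intro pure_filtration.intro pure_filtration_axioms.intro assms(1,2,6) basis
        assms(4)[THEN psubset_imp_subset])
  show ?thesis
    using admissible_G_aleph0_family admissible_pure[OF assms(3)]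
    unfolding admissible_def by blast
qed

end
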